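(* Assume conditions (I)–(IX) of the context and let $d=\min\{4-2(a+b),\,2-2b,\,2-(a+c),\,2-4a\}$. Then there is $K>0$ such that for each $j\in\mathbb N$ and all $\varepsilon>0$ small enough, \[\lambda_j(-\tilde\Delta_\varepsilon)-\Big(\frac{\pi}{2\varepsilon}\Big)^2\le\lambda_j\Big(-\Delta_{\mathbb R}+\frac{|\Theta_\varepsilon'(s)|^2}{2}\Big)+K\varepsilon^{d}.\]
   Context: Fix $n\ge1$, $0<a<1/3$, $\Lambda=\mathbb R\times(-1,1)$. $\Theta:\mathbb R\to\mathbb R^n$ is $C^{1,1}$ with $|\Theta|=1$, (I) $|\Theta'(s)|\to\infty$ as $|s|\to\infty$, (II) $|\Theta'|$ decreasing on $(-\infty,0)$, increasing on $(0,\infty)$. For small $\varepsilon$, $\nu_1(\varepsilon)<0<\nu_2(\varepsilon)$ satisfy $|\Theta'(\nu_i(\varepsilon))|=\varepsilon^{-a}$, $I_\varepsilon=(\nu_1(\varepsilon),\nu_2(\varepsilon))$; $\Theta_\varepsilon:\mathbb R\to\mathbb R^n$ are $C^{1,1}$ with (III) $\Theta_\varepsilon=\Theta$ on $I_\varepsilon$; (IV) $|\Theta_\varepsilon'|\le|\Theta'|$; (V) $|\Theta_\varepsilon'|$ non-increasing on $(-\infty,0)$, non-decreasing on $(0,\infty)$; (VI) for some $K>0$ and reals $b<1$, $c$ with $a+c<2$: $|\Theta_\varepsilon'|\le K\varepsilon^{-a}$, $|\Theta_\varepsilon''|\le K\varepsilon^{-b}$, $|\Theta_\varepsilon'''|\le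 K\varepsilon^{-c}$; (VII) $|\Theta_\varepsilon'(s)|\le|\Theta_{\varepsilon'}'(s)|$ whenever $\varepsilon>\varepsilon'$; (VIII) $|\Theta_\varepsilon|=1$; (IX) $\Gamma_\varepsilon$ is a $C^{1,1}$ arc-length curve in $\mathbb R^{n+1}$ with relatively parallel adapted frame $N^\varepsilon_j$ and curvature vector $k_\varepsilon$ with $\operatorname{supp}k_\varepsilon\subset I_\varepsilon$ and $k_\varepsilon\cdot\Theta_\varepsilon\equiv0$. With $\tilde f_\varepsilon(s,t)=\sqrt{1+|\Theta_\varepsilon'(s)|^2\varepsilon^2t^2}$, $-\tilde\Delta_\varepsilon$ (the Dirichlet Laplacian of the strip $\{\Gamma_\varepsilon(s)+\varepsilon t\sum_j\Theta^\varepsilon_jN^\varepsilon_j(s)\}$) is the self-adjoint operator in $L^2(\Lambda,\varepsilon\tilde f_\varepsilon\,ds\,dt)$ associated with $\psi\mapsto\int_\Lambda(|\partial_s\psi|^2/\tilde f_\varepsilon^2+|\partial_t\psi|^2/\varepsilon^2)\varepsilon\tilde f_\varepsilon\,ds\,dt$ on $H^1_0(\Lambda)$. $\lambda_j(\cdot)$ are min-max values; $-\Delta_{\mathbb R}+V$ is the form-defined Schrödinger operator in $L^2(\mathbb R)$. *)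

theory Defs
  imports "HOL-Analysis.Analysis"
begin

definition Lambda :: "(real \<times> real) set" where
  "Lambda = UNIV \<times> {-1<..<1}"

definition tsupp :: "('a::topological_space \<Rightarrow> real) \<Rightarrow> 'a set" where
  "tsupp f = closure {z. f z \<noteq> 0}"

text \<open>Test functions: C^1 functions with compact support inside the open set U
  (a form core for H^1_0(U)).\<close>
definition test_fun :: "('a::euclidean_space \<Rightarrow> real) \<Rightarrow> 'a set \<Rightarrow> bool" where
  "test_fun \<phi> U \<longleftrightarrow>
     (\<forall>z. \<phi> differentiable (at z)) \<and>
     (\<forall>v. continuous_on UNIV (\<lambda>z. frechet_derivative \<phi> (at z) v)) \<and>
     compact (tsupp \<phi>) \<and> tsupp \<phi> \<subseteq> U"

definition ds :: "(real \<times> real \<Rightarrow> real) \<Rightarrow> real \<times> real \<Rightarrow> real" where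
  "ds \<psi> z = frechet_derivative \<psi> (at z) (1, 0)"
definition dt :: "(real \<times> real \<Rightarrow> real) \<Rightarrow> real \<times> real \<Rightarrow> real" where
  "dt \<psi> z = frechet_derivative \<psi> (at z) (0, 1)"

text \<open>Weight f_eps(s,t) = sqrt(1 + w(s)^2 eps^2 t^2), with w = |Theta_eps'|.\<close>
definition ftil :: "real \<Rightarrow> (real \<Rightarrow> real) \<Rightarrow> real \<times> real \<Rightarrow> real" where
  "ftil \<epsilon> w z = sqrt (1 + (w (fst z))\<^sup>2 * \<epsilon>\<^sup>2 * (snd z)\<^sup>2)"

definition strip_Q :: "real \<Rightarrow> (real \<Rightarrow> real) \<Rightarrow> (real \<times> real \<Rightarrow> real) \<Rightarrow> real" where
  "strip_Q \<epsilon> w \<psi> = (\<integral>z. ((ds \<psi> z)\<^sup>2 / (ftil \<epsilon> w z)\<^sup>2 + (dt \<psi> z)\<^sup>2 / \<epsilon>\<^sup>2)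
                              * \<epsilon> * ftil \<epsilon> w z \<partial>lborel)"

definition strip_N :: "real \<Rightarrow> (real \<Rightarrow> real) \<Rightarrow> (real \<times> real \<Rightarrow> real) \<Rightarrow> real" where
  "strip_N \<epsilon> w \<psi> = (\<integral>z. (\<psi> z)\<^sup>2 * \<epsilon> * ftil \<epsilon> w z \<partial>lborel)"

definition schr_Q :: "(real \<Rightarrow> real) \<Rightarrow> (real \<Rightarrow> real) \<Rightarrow> real" where
  "schr_Q V u = (\<integral>x. (deriv u x)\<^sup>2 + V x * (u x)\<^sup>2 \<partial>lborel)"

definition L2_N :: "(real \<Rightarrow> real) \<Rightarrow> real" where
  "L2_N u = (\<integral>x. (u x)\<^sup>2 \<partial>lborel)"

definition minmax :: "(('a \<Rightarrow> real) \<Rightarrow> real) \<Rightarrow> (('a \<Rightarrow> real) \<Rightarrow> real)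
                      \<Rightarrow> (('a \<Rightarrow> real) \<Rightarrow> bool) \<Rightarrow> nat \<Rightarrow> ereal" where
  "minmax Q N T j =
     (INF \<phi> \<in> {\<phi>. (\<forall>i<j. T (\<phi> i)) \<and>
                 (\<forall>c. (\<forall>x. (\<Sum>i<j. c i * \<phi> i x) = 0) \<longrightarrow> (\<forall>i<j. c i = 0))}.
        (SUP c \<in> {c. \<exists>i<j. c i \<noteq> 0}.
           ereal (Q (\<lambda>x. \<Sum>i<j. c i * \<phi> i x) / N (\<lambda>x. \<Sum>i<j. c i * \<phi> i x))))"

definition lam_strip :: "real \<Rightarrow> (real \<Rightarrow> real) \<Rightarrow> nat \<Rightarrow> ereal" where
  "lam_strip \<epsilon> w j = minmax (strip_Q \<epsilon> w) (strip_N \<epsilon> w) (\<lambda>\<psi>. test_fun \<psi> Lambda) j"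

definition lam_schr :: "(real \<Rightarrow> real) \<Rightarrow> nat \<Rightarrow> ereal" where
  "lam_schr V j = minmax (schr_Q V) L2_N (\<lambda>u. test_fun u UNIV) j"

end

theory Submission
  imports Defs
begin

text \<open>The bound comes from min-max with product trial functions. If \<open>u\<^sub>1, ..., u\<^sub>j\<close> are trial
  functions for \<open>-\<Delta> + w\<^sup>2/2\<close> with \<open>w = |\<Theta>\<^sub>\<epsilon>'|\<close>, then the \<open>u\<^sub>i(s) \<chi>(t)\<close> are trial functions for the
  strip, where \<open>\<chi>\<close> is a \<open>C\<^sup>1\<close> cutoff of the transversal ground state \<open>cos (pi t / 2)\<close> vanishing
  near \<open>t = \<plusminus>1\<close>. On a fiber \<open>s = const\<close>, expanding the weight \<open>sqrt (1 + w(s)\<^sup>2 \<epsilon>\<^sup>2 t\<^sup>2)\<close> to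
  second order shows that the transversal Rayleigh quotient of \<open>\<chi>\<close> is at most
  \<open>(pi/(2\<epsilon>))\<^sup>2 + w(s)\<^sup>2/2\<close> up to an error \<open>O((\<eta> + (w \<epsilon>)\<^sup>4) / \<epsilon>\<^sup>2)\<close>, where \<open>\<eta>\<close> measures the
  cutoff. With \<open>w \<le> K\<^sub>0 \<epsilon>\<^sup>-\<^sup>a\<close> from (VI) the second term is \<open>O(\<epsilon>\<^sup>2\<^sup>-\<^sup>4\<^sup>a)\<close>, and \<open>\<eta>\<close> is taken of
  order \<open>\<epsilon>\<^sup>2\<^sup>+\<^sup>d\<close>.\<close>

section \<open>A \<open>C\<^sup>1\<close> cutoff of the transversal ground state\<close>

definition ramp :: "real \<Rightarrow> real \<Rightarrow> real" where
  "ramp \<eta> y = ((max 0 (y - \<eta>))\<^sup>2 - (max 0 (y - 2*\<eta>))\<^sup>2) / (2*\<eta>)"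

definition ramp_deriv :: "real \<Rightarrow> real \<Rightarrow> real" where
  "ramp_deriv \<eta> y = (max 0 (y - \<eta>) - max 0 (y - 2*\<eta>)) / \<eta>"

lemma has_real_derivative_pos_part_sq:
  "((\<lambda>y::real. (max 0 y)\<^sup>2) has_real_derivative 2 * max 0 y) (at y)"
proof -
  consider "y > 0" | "y < 0" | "y = 0" by linarith
  then show ?thesis
  proof cases
    case 1
    have "((\<lambda>y::real. y\<^sup>2) has_real_derivative 2 * max 0 y) (at y)"
      using 1 by (auto intro!: derivative_eq_intros)
    then show ?thesis
      by (rule has_field_derivative_transform_within_open[where S="{0<..}"]) (use 1 in auto)
  next
    case 2
    have "((\<lambda>y::real. 0) has_real_derivative 2 * max 0 y) (at y)" using 2 by simp
    then show ?thesis
      by (rule has_field_derivative_transform_within_open[where S="{..<0}"]) (use 2 in auto)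
  next
    case 3
    have "\<forall>\<^sub>F x in at 0. max 0 (x::real) = ((max 0 x)\<^sup>2 - (max 0 0)\<^sup>2) / (x - 0)"
      by (auto simp: eventually_at_filter max_def power2_eq_square intro!: always_eventually)
    moreover have "((\<lambda>x::real. max 0 x) \<longlongrightarrow> max 0 0) (at 0)"
      by (intro tendsto_intros)
    ultimately have "((\<lambda>x. ((max 0 x)\<^sup>2 - (max 0 0)\<^sup>2) / (x - 0)) \<longlongrightarrow> 0) (at (0::real))"
      by (auto dest: tendsto_cong[THEN iffD1, rotated])
    then show ?thesis using 3 by (simp add: has_field_derivative_iff)
  qed
qed

lemma ramp_has_real_derivative:
  assumes "0 < \<eta>"
  shows "(ramp \<eta> has_real_derivative ramp_deriv \<eta> y) (at y)"
proof -
  have "((\<lambda>y. (max 0 (y - c))\<^sup>2) has_real_derivative 2 * max 0 (y - c)) (at y)" for c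
    using DERIV_shift[of "\<lambda>y. (max 0 y)\<^sup>2" _ y "-c"] has_real_derivative_pos_part_sq[of "y - c"]
    by simp
  then have "(ramp \<eta> has_real_derivative (2 * max 0 (y - \<eta>) - 2 * max 0 (y - 2*\<eta>)) / (2*\<eta>)) (at y)"
    unfolding ramp_def[abs_def] by (intro DERIV_cdivide DERIV_diff)
  moreover have "(2 * max 0 (y - \<eta>) - 2 * max 0 (y - 2*\<eta>)) / (2*\<eta>) = ramp_deriv \<eta> y"
    using assms unfolding ramp_deriv_def by (simp add: field_simps)
  ultimately show ?thesis by simp
qed

lemma ramp_eq_0: "0 < \<eta> \<Longrightarrow> y < \<eta> \<Longrightarrow> ramp \<eta> y = 0"
  unfolding ramp_def by (auto simp: max_def)

lemma ramp_deriv_eq_0: "0 < \<eta> \<Longrightarrow> y < \<eta> \<Longrightarrow> ramp_deriv \<eta> y = 0"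
  unfolding ramp_deriv_def by (auto simp: max_def)

lemma ramp_deriv_bounds: "0 < \<eta> \<Longrightarrow> 0 \<le> ramp_deriv \<eta> y \<and> ramp_deriv \<eta> y \<le> 1"
  unfolding ramp_deriv_def by (auto simp: max_def field_simps)

lemma ramp_sq_ge:
  assumes "0 < \<eta>" "0 \<le> y"
  shows "y\<^sup>2 - 4*\<eta>*y \<le> (ramp \<eta> y)\<^sup>2"
proof (cases "2*\<eta> \<le> y")
  case True
  then have "ramp \<eta> y = y - 3*\<eta>/2"
    using assms unfolding ramp_def by (simp add: max_def power2_eq_square field_simps)
  moreover have "y\<^sup>2 - 4*\<eta>*y \<le> (y - 3*\<eta>/2)\<^sup>2"
    using True assms by (simp add: power2_eq_square algebra_simps)
  ultimately show ?thesis by simp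
next
  case False
  then have "y\<^sup>2 - 4*\<eta>*y \<le> 0"
    using assms mult_right_mono[of y "4*\<eta>" y] by (simp add: power2_eq_square)
  then show ?thesis by (smt (verit) zero_le_power2)
qed

definition unit_clamp :: "real \<Rightarrow> real" where
  "unit_clamp t = max (-1) (min 1 t)"

text \<open>The clamp extends \<open>cos (pi t / 2)\<close> by \<open>0\<close> outside \<open>[-1, 1]\<close>; composing with \<open>ramp \<eta>\<close> makes the
  cutoff vanish where \<open>cos (pi t / 2) < \<eta>\<close>, so its support is a compact subset of \<open>(-1, 1)\<close>.\<close>
definition cutoff :: "real \<Rightarrow> real \<Rightarrow> real" where
  "cutoff \<eta> t = ramp \<eta> (cos (pi/2 * unit_clamp t))"

definition cutoff_deriv :: "real \<Rightarrow> real \<Rightarrow> real" where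
  "cutoff_deriv \<eta> t = ramp_deriv \<eta> (cos (pi/2 * unit_clamp t)) * (-(pi/2) * sin (pi/2 * unit_clamp t))"

lemma unit_clamp_id: "\<bar>t\<bar> \<le> 1 \<Longrightarrow> unit_clamp t = t"
  unfolding unit_clamp_def by auto

lemma cos_unit_clamp_less:
  assumes "0 < \<eta>" "\<eta> \<le> 1" "1 - \<eta>/2 < \<bar>t\<bar>"
  shows "cos (pi/2 * unit_clamp t) < \<eta>"
proof -
  define x where "x = min 1 \<bar>t\<bar>"
  have x: "1 - \<eta>/2 < x" "x \<le> 1" using assms unfolding x_def by auto
  have "\<bar>unit_clamp t\<bar> = x"
    unfolding x_def unit_clamp_def by (cases "t \<ge> 0") (auto simp: min_def max_def)
  then have "\<bar>pi/2 * unit_clamp t\<bar> = pi/2 * x" by (simp add: abs_mult)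
  then have "cos (pi/2 * unit_clamp t) = cos (pi/2 * x)" by (metis cos_abs_real)
  also have "\<dots> = sin (pi/2 - pi/2 * x)" by (simp add: cos_sin_eq)
  also have "\<dots> \<le> pi/2 - pi/2 * x" using x by (intro sin_x_le_x) auto
  also have "\<dots> = pi/2 * (1 - x)" by (simp add: algebra_simps)
  also have "\<dots> < pi/2 * (\<eta>/2)" using x by (intro mult_strict_left_mono) auto
  also have "\<dots> < \<eta>" using pi_less_4 assms by (simp add: field_simps)
  finally show ?thesis .
qed

lemma cutoff_vanishes_near_boundary:
  assumes "0 < \<eta>" "\<eta> \<le> 1" "1 - \<eta>/2 < \<bar>t\<bar>"
  shows "cutoff \<eta> t = 0" "cutoff_deriv \<eta> t = 0"
  using cos_unit_clamp_less[OF assms] ramp_eq_0 ramp_deriv_eq_0 assms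
  unfolding cutoff_def cutoff_deriv_def by auto

lemma cutoff_has_real_derivative:
  assumes "0 < \<eta>" "\<eta> \<le> 1"
  shows "(cutoff \<eta> has_real_derivative cutoff_deriv \<eta> t) (at t)"
proof (cases "\<bar>t\<bar> < 1")
  case True
  have "((\<lambda>s. ramp \<eta> (cos (pi/2 * s))) has_real_derivative
          ramp_deriv \<eta> (cos (pi/2 * t)) * (- sin (pi/2 * t) * (pi/2))) (at t)"
    by (rule ramp_has_real_derivative[OF assms(1), THEN DERIV_chain2])
       (auto intro!: derivative_eq_intros)
  then have "((\<lambda>s. ramp \<eta> (cos (pi/2 * s))) has_real_derivative cutoff_deriv \<eta> t) (at t)"
    using True unit_clamp_id[of t] unfolding cutoff_deriv_def by (simp add: algebra_simps)
  then show ?thesis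
    by (rule has_field_derivative_transform_within_open[where S="{-1<..<1}"])
       (use True unit_clamp_id in \<open>auto simp: cutoff_def\<close>)
next
  case False
  have "((\<lambda>s. 0) has_real_derivative cutoff_deriv \<eta> t) (at t)"
    using False assms cutoff_vanishes_near_boundary[of \<eta> t] by simp
  then show ?thesis
    by (rule has_field_derivative_transform_within_open[where S="{s. 1 - \<eta>/2 < \<bar>s\<bar>}"])
       (use False assms cutoff_vanishes_near_boundary in
         \<open>auto intro!: open_Collect_less continuous_intros\<close>)
qed

lemma continuous_on_cutoff: "0 < \<eta> \<Longrightarrow> continuous_on UNIV (cutoff \<eta>)"
  unfolding cutoff_def[abs_def] ramp_def unit_clamp_def by (intro continuous_intros) auto

lemma continuous_on_cutoff_deriv: "0 < \<eta> \<Longrightarrow> continuous_on UNIV (cutoff_deriv \<eta>)"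
  unfolding cutoff_deriv_def[abs_def] ramp_deriv_def unit_clamp_def by (intro continuous_intros) auto

lemma cutoff_0_neq_0:
  assumes "0 < \<eta>" "\<eta> \<le> 1/16"
  shows "cutoff \<eta> 0 \<noteq> 0"
proof -
  have "cutoff \<eta> 0 = 1 - 3*\<eta>/2"
    using assms unfolding cutoff_def unit_clamp_def ramp_def
    by (simp add: max_def power2_eq_square field_simps)
  then show ?thesis using assms by simp
qed

lemma cutoff_bounds:
  assumes "0 < \<eta>" "\<bar>t\<bar> \<le> 1"
  shows "(cos (pi/2 * t))\<^sup>2 - 4*\<eta>*cos (pi/2 * t) \<le> (cutoff \<eta> t)\<^sup>2"
    and "(cutoff_deriv \<eta> t)\<^sup>2 \<le> (pi/2)\<^sup>2 * (sin (pi/2 * t))\<^sup>2"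
    and "0 \<le> cos (pi/2 * t)"
proof -
  show cos_nonneg: "0 \<le> cos (pi/2 * t)"
  proof (intro cos_ge_zero)
    show "- (pi/2) \<le> pi/2 * t" "pi/2 * t \<le> pi/2"
      using assms(2) mult_left_mono[of t 1 "pi/2"] mult_left_mono[of "-1" t "pi/2"]
      by (auto simp: abs_le_iff)
  qed
  show "(cos (pi/2 * t))\<^sup>2 - 4*\<eta>*cos (pi/2 * t) \<le> (cutoff \<eta> t)\<^sup>2"
    using ramp_sq_ge[OF assms(1) cos_nonneg] unit_clamp_id[OF assms(2)] unfolding cutoff_def by simp
  have "(cutoff_deriv \<eta> t)\<^sup>2 = (ramp_deriv \<eta> (cos (pi/2 * t)))\<^sup>2 * ((pi/2)\<^sup>2 * (sin (pi/2 * t))\<^sup>2)"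
    using unit_clamp_id[OF assms(2)] unfolding cutoff_deriv_def
    by (simp add: power_mult_distrib power2_eq_square)
  also have "\<dots> \<le> 1 * ((pi/2)\<^sup>2 * (sin (pi/2 * t))\<^sup>2)"
    using ramp_deriv_bounds[OF assms(1)] by (intro mult_right_mono) (auto simp: power_le_one)
  finally show "(cutoff_deriv \<eta> t)\<^sup>2 \<le> (pi/2)\<^sup>2 * (sin (pi/2 * t))\<^sup>2" by simp
qed

section \<open>Transversal integrals\<close>

lemma integrable_continuous_vanishing_outside:
  fixes f :: "'a::euclidean_space \<Rightarrow> real"
  assumes "continuous_on UNIV f" "compact K" "\<And>x. x \<notin> K \<Longrightarrow> f x = 0"
  shows "integrable lborel f"
proof -
  have "integrable lborel (\<lambda>x. indicator K x *\<^sub>R f x)"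
    by (rule borel_integrable_compact) (auto intro: continuous_on_subset[OF assms(1)] assms(2))
  moreover have "(\<lambda>x. indicator K x *\<^sub>R f x) = f"
    using assms(3) by (auto simp: indicator_def fun_eq_iff)
  ultimately show ?thesis by simp
qed

lemma integrable_cutoff_combination:
  fixes f :: "real \<Rightarrow> real"
  assumes "0 < \<eta>" "\<eta> \<le> 1" "continuous_on UNIV f"
    and "\<And>t. cutoff \<eta> t = 0 \<Longrightarrow> cutoff_deriv \<eta> t = 0 \<Longrightarrow> f t = 0"
  shows "integrable lborel f"
proof (rule integrable_continuous_vanishing_outside[OF assms(3) compact_Icc])
  fix t :: real assume "t \<notin> {-1..1}"
  then have "1 - \<eta>/2 < \<bar>t\<bar>" using assms(1) by auto
  then show "f t = 0" using assms(4) cutoff_vanishes_near_boundary[OF assms(1,2)] by blast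
qed

lemma integral_indicator_Icc_FTC:
  fixes F G :: "real \<Rightarrow> real"
  assumes "a \<le> b" "\<And>x. (G has_real_derivative F x) (at x)" "continuous_on UNIV F"
  shows "(\<integral>x. indicator {a..b} x *\<^sub>R F x \<partial>lborel) = G b - G a"
  using assms
  by (intro integral_FTC_atLeastAtMost)
     (auto intro: continuous_on_subset has_field_derivative_at_within
           simp: has_real_derivative_iff_has_vector_derivative[symmetric])

lemma sqrt_one_plus_bounds:
  fixes x :: real
  assumes "0 \<le> x"
  shows "sqrt (1 + x) \<le> 1 + x/2" "1 + x/2 - x\<^sup>2/8 \<le> sqrt (1 + x)"
proof -
  have "1 + x \<le> (1 + x/2)\<^sup>2" by (simp add: power2_eq_square field_simps)
  then show "sqrt (1 + x) \<le> 1 + x/2" using assms by (simp add: real_sqrt_le_iff')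
  show "1 + x/2 - x\<^sup>2/8 \<le> sqrt (1 + x)"
  proof (cases "x \<le> 8")
    case True
    have "(1 + x/2 - x\<^sup>2/8)\<^sup>2 = 1 + x - x\<^sup>2/4 * (1 - (1 - x/4)\<^sup>2)"
      by (simp add: power2_eq_square field_simps)
    also have "\<dots> \<le> 1 + x"
      using True assms by (auto intro!: mult_nonneg_nonneg simp: abs_square_le_1)
    finally show ?thesis by (rule real_le_rsqrt)
  next
    case False
    have "8 * x \<le> x * x" using False by (intro mult_right_mono) auto
    then have "1 + x/2 - x\<^sup>2/8 \<le> 0" using False unfolding power2_eq_square by linarith
    then show ?thesis by (smt (verit) real_sqrt_ge_zero assms)
  qed
qed

lemma cutoff_L2_ge:
  assumes "0 < \<eta>" "\<eta> \<le> 1"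
  shows "1 - 8*\<eta> \<le> (\<integral>t. (cutoff \<eta> t)\<^sup>2 \<partial>lborel)"
proof -
  define F where "F t = (1 + cos (pi*t))/2 - 4*\<eta>" for t
  have "(\<integral>t. indicator {-1..1} t *\<^sub>R F t \<partial>lborel) = 1 - 8*\<eta>"
  proof -
    define G where "G t = t/2 + sin (pi*t)/(2*pi) - 4*\<eta>*t" for t
    have "(G has_real_derivative F t) (at t)" for t
      unfolding G_def F_def by (auto intro!: derivative_eq_intros simp: field_simps)
    then have "(\<integral>t. indicator {-1..1} t *\<^sub>R F t \<partial>lborel) = G 1 - G (-1)"
      by (intro integral_indicator_Icc_FTC) (auto simp: F_def intro!: continuous_intros)
    then show ?thesis unfolding G_def by simp
  qed
  moreover have "(\<integral>t. indicator {-1..1} t *\<^sub>R F t \<partial>lborel) \<le> (\<integral>t. (cutoff \<eta> t)\<^sup>2 \<partial>lborel)"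
  proof (rule integral_mono)
    show "integrable lborel (\<lambda>t. indicator {-1..1} t *\<^sub>R F t)"
      unfolding F_def by (intro borel_integrable_compact) (auto intro!: continuous_intros)
    show "integrable lborel (\<lambda>t. (cutoff \<eta> t)\<^sup>2)"
      using assms continuous_on_cutoff
      by (intro integrable_cutoff_combination) (auto intro!: continuous_intros)
    fix t
    show "indicator {-1..1} t *\<^sub>R F t \<le> (cutoff \<eta> t)\<^sup>2"
    proof (cases "\<bar>t\<bar> \<le> 1")
      case True
      note bounds = cutoff_bounds[OF assms(1) True]
      have "cos (pi*t) = 2 * (cos (pi/2 * t))\<^sup>2 - 1" using cos_double_cos[of "pi/2 * t"] by simp
      then have "F t \<le> (cos (pi/2 * t))\<^sup>2 - 4*\<eta>*cos (pi/2 * t)"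
        unfolding F_def using bounds(3) assms mult_left_mono[of "cos (pi/2 * t)" 1 "4*\<eta>"] by auto
      then show ?thesis using bounds(1) True by (auto simp: indicator_def abs_le_iff)
    qed (auto simp: indicator_def abs_le_iff)
  qed
  ultimately show ?thesis by simp
qed

lemma sqrt_one_plus_second_order:
  fixes x c :: real
  assumes "0 \<le> x" "\<bar>c\<bar> \<le> 1"
  shows "- c * sqrt (1 + x) \<le> - c * (1 + x/2) + x\<^sup>2/8"
proof (cases "c \<ge> 0")
  case True
  have "- c * sqrt (1 + x) \<le> - c * (1 + x/2 - x\<^sup>2/8)"
    using sqrt_one_plus_bounds(2)[OF assms(1)] True by (simp add: mult_left_mono)
  moreover have "c * (x\<^sup>2/8) \<le> 1 * (x\<^sup>2/8)" using assms(2) by (intro mult_right_mono) auto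
  ultimately show ?thesis by (simp add: algebra_simps)
next
  case False
  have "- c * sqrt (1 + x) \<le> - c * (1 + x/2)"
    using sqrt_one_plus_bounds(1)[OF assms(1)] False by (intro mult_left_mono) auto
  then show ?thesis by (smt (verit) zero_le_power2 divide_nonneg_pos)
qed

lemma cutoff_energy_density_le:
  assumes "0 < \<eta>" "\<bar>t\<bar> \<le> 1"
  shows "(cutoff_deriv \<eta> t)\<^sup>2 - (pi\<^sup>2/4) * (cutoff \<eta> t)\<^sup>2
         \<le> -(pi\<^sup>2/4) * cos (pi*t) + pi\<^sup>2 * \<eta> * cos (pi/2 * t)"
proof -
  note bounds = cutoff_bounds[OF assms]
  have "cos (pi*t) = (cos (pi/2 * t))\<^sup>2 - (sin (pi/2 * t))\<^sup>2"
    using cos_double[of "pi/2 * t"] by simp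
  then have "(pi\<^sup>2/4) * cos (pi*t) = (pi\<^sup>2/4) * (cos (pi/2 * t))\<^sup>2 - (pi\<^sup>2/4) * (sin (pi/2 * t))\<^sup>2"
    by (simp add: right_diff_distrib)
  moreover have "(pi\<^sup>2/4) * ((cos (pi/2 * t))\<^sup>2 - 4*\<eta>*cos (pi/2 * t)) \<le> (pi\<^sup>2/4) * (cutoff \<eta> t)\<^sup>2"
    using bounds(1) by (intro mult_left_mono) auto
  moreover have "(cutoff_deriv \<eta> t)\<^sup>2 \<le> (pi\<^sup>2/4) * (sin (pi/2 * t))\<^sup>2"
    using bounds(2) by (simp add: power_divide)
  ultimately show ?thesis by (simp add: algebra_simps)
qed

lemma cutoff_weighted_energy_pointwise:
  assumes "0 < \<eta>" "\<bar>t\<bar> \<le> 1" "0 \<le> A"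
  shows "((cutoff_deriv \<eta> t)\<^sup>2 - (pi\<^sup>2/4) * (cutoff \<eta> t)\<^sup>2) * sqrt (1 + A * t\<^sup>2)
         \<le> -(pi\<^sup>2/4) * cos (pi*t) * (1 + A * t\<^sup>2 / 2) + (pi\<^sup>2/32) * A\<^sup>2 + pi\<^sup>2 * \<eta> * (1 + A/2)"
proof -
  define c where "c = cos (pi/2 * t)"
  define x where "x = A * t\<^sup>2"
  define g where "g = sqrt (1 + x)"
  have x: "0 \<le> x" "x \<le> A"
    unfolding x_def using assms(3) mult_left_mono[OF abs_square_le_1[THEN iffD2, OF assms(2)] assms(3)]
    by simp_all
  have g: "0 \<le> g" "g \<le> 1 + x/2" unfolding g_def using x sqrt_one_plus_bounds(1) by auto
  have cg: "c * g \<le> 1 + A/2"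
    using mult_mono[OF cos_le_one[of "pi/2 * t"] g(2)] cutoff_bounds(3)[OF assms(1,2)] g(1) x(2)
    unfolding c_def by simp
  have x2: "(pi\<^sup>2/4) * (x\<^sup>2/8) \<le> (pi\<^sup>2/4) * (A\<^sup>2/8)"
    using x by (intro mult_left_mono divide_right_mono power_mono) auto
  have "((cutoff_deriv \<eta> t)\<^sup>2 - (pi\<^sup>2/4) * (cutoff \<eta> t)\<^sup>2) * g
        \<le> (-(pi\<^sup>2/4) * cos (pi*t) + pi\<^sup>2 * \<eta> * c) * g"
    using cutoff_energy_density_le[OF assms(1,2)] g(1) unfolding c_def by (rule mult_right_mono)
  also have "\<dots> = (pi\<^sup>2/4) * (- cos (pi*t) * g) + pi\<^sup>2 * \<eta> * (c * g)" by (simp add: algebra_simps)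
  also have "\<dots> \<le> (pi\<^sup>2/4) * (- cos (pi*t) * (1 + x/2) + x\<^sup>2/8) + pi\<^sup>2 * \<eta> * (1 + A/2)"
    using sqrt_one_plus_second_order[OF x(1), of "cos (pi*t)"] cg assms unfolding g_def
    by (intro add_mono mult_left_mono) auto
  also have "\<dots> \<le> (pi\<^sup>2/4) * (- cos (pi*t) * (1 + x/2) + A\<^sup>2/8) + pi\<^sup>2 * \<eta> * (1 + A/2)"
    using x2 by (simp add: distrib_left)
  also have "\<dots> = -(pi\<^sup>2/4) * cos (pi*t) * (1 + A * t\<^sup>2 / 2) + (pi\<^sup>2/32) * A\<^sup>2 + pi\<^sup>2 * \<eta> * (1 + A/2)"
    unfolding x_def by (simp add: algebra_simps)
  finally show ?thesis unfolding g_def x_def .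
qed

text \<open>For the exact mode \<open>cos (pi t / 2)\<close> the integrand is \<open>-(pi\<^sup>2/4) cos (pi t) sqrt (1 + A t\<^sup>2)\<close>,
  and \<open>\<integral>\<^sub>-\<^sub>1\<^sup>1 -(pi\<^sup>2/4) cos (pi t) (1 + A t\<^sup>2/2) dt = A/2\<close>.\<close>
lemma cutoff_weighted_energy_le:
  assumes "0 < \<eta>" "\<eta> \<le> 1" "0 \<le> A"
  shows "(\<integral>t. ((cutoff_deriv \<eta> t)\<^sup>2 - (pi\<^sup>2/4) * (cutoff \<eta> t)\<^sup>2) * sqrt (1 + A * t\<^sup>2) \<partial>lborel)
         \<le> A/2 + (pi\<^sup>2/16) * A\<^sup>2 + 2 * pi\<^sup>2 * \<eta> * (1 + A/2)"
proof -
  define C where "C = (pi\<^sup>2/32) * A\<^sup>2 + pi\<^sup>2 * \<eta> * (1 + A/2)"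
  define F where "F t = -(pi\<^sup>2/4) * cos (pi*t) * (1 + A * t\<^sup>2 / 2) + C" for t
  have "(\<integral>t. indicator {-1..1} t *\<^sub>R F t \<partial>lborel) = A/2 + 2*C"
  proof -
    define G where "G t = -(pi\<^sup>2/4) * (sin (pi*t)/pi + (A/2) * (t\<^sup>2 * sin (pi*t)/pi
        + 2*t*cos (pi*t)/pi\<^sup>2 - 2 * sin (pi*t)/pi^3)) + C * t" for t
    have "(G has_real_derivative F t) (at t)" for t
      unfolding G_def F_def
      by (auto intro!: derivative_eq_intros simp: field_simps power2_eq_square power3_eq_cube)
    then have "(\<integral>t. indicator {-1..1} t *\<^sub>R F t \<partial>lborel) = G 1 - G (-1)"
      by (intro integral_indicator_Icc_FTC) (auto simp: F_def intro!: continuous_intros)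
    then show ?thesis unfolding G_def by (simp add: field_simps power2_eq_square)
  qed
  moreover have "(\<integral>t. ((cutoff_deriv \<eta> t)\<^sup>2 - (pi\<^sup>2/4) * (cutoff \<eta> t)\<^sup>2) * sqrt (1 + A * t\<^sup>2) \<partial>lborel)
        \<le> (\<integral>t. indicator {-1..1} t *\<^sub>R F t \<partial>lborel)"
  proof (rule integral_mono)
    show "integrable lborel (\<lambda>t. indicator {-1..1} t *\<^sub>R F t)"
      unfolding F_def by (intro borel_integrable_compact) (auto intro!: continuous_intros)
    show "integrable lborel (\<lambda>t. ((cutoff_deriv \<eta> t)\<^sup>2 - (pi\<^sup>2/4) * (cutoff \<eta> t)\<^sup>2) * sqrt (1 + A * t\<^sup>2))"
      using assms continuous_on_cutoff continuous_on_cutoff_deriv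
      by (intro integrable_cutoff_combination) (auto intro!: continuous_intros)
    show "((cutoff_deriv \<eta> t)\<^sup>2 - (pi\<^sup>2/4) * (cutoff \<eta> t)\<^sup>2) * sqrt (1 + A * t\<^sup>2)
          \<le> indicator {-1..1} t *\<^sub>R F t" for t
    proof (cases "\<bar>t\<bar> \<le> 1")
      case True
      then show ?thesis
        using cutoff_weighted_energy_pointwise[OF assms(1) True assms(3)]
        unfolding F_def C_def by (simp add: indicator_def abs_le_iff algebra_simps)
    next
      case False
      then show ?thesis
        using cutoff_vanishes_near_boundary[OF assms(1,2), of t] assms(1)
        by (auto simp: indicator_def abs_le_iff)
    qed
  qed
  ultimately show ?thesis unfolding C_def by (simp add: algebra_simps)
qed

section \<open>Product trial functions\<close>

lemma not_in_tsupp: "x \<notin> tsupp f \<Longrightarrow> f x = 0"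
  using closure_subset[of "{z. f z \<noteq> 0}"] unfolding tsupp_def by auto

lemma has_real_derivative_outside_tsupp:
  fixes u :: "real \<Rightarrow> real"
  assumes "\<And>x. (u has_real_derivative u' x) (at x)" "s \<notin> tsupp u"
  shows "u' s = 0"
proof -
  have "((\<lambda>x. 0) has_real_derivative u' s) (at s)"
    by (rule has_field_derivative_transform_within_open[OF assms(1), of "- tsupp u"])
       (use assms(2) not_in_tsupp in \<open>auto simp: tsupp_def\<close>)
  then show ?thesis using DERIV_const DERIV_unique by blast
qed

lemma compact_tsupp_subset:
  fixes f :: "'a::t2_space \<Rightarrow> real"
  assumes "compact K" "{x. f x \<noteq> 0} \<subseteq> K"
  shows "compact (tsupp f)" "tsupp f \<subseteq> K"
proof -
  show "tsupp f \<subseteq> K"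
    unfolding tsupp_def using assms compact_imp_closed[OF assms(1)] by (intro closure_minimal)
  then show "compact (tsupp f)"
    using assms(1) unfolding tsupp_def by (metis closed_closure compact_Int_closed inf.absorb2)
qed

lemma test_fun_lincomb:
  fixes \<phi> :: "nat \<Rightarrow> 'a::euclidean_space \<Rightarrow> real"
  assumes "\<forall>i<j. test_fun (\<phi> i) U"
  shows "test_fun (\<lambda>x. \<Sum>i<j. c i * \<phi> i x) U"
proof -
  have d: "((\<lambda>x. \<Sum>i<j. c i * \<phi> i x) has_derivative
           (\<lambda>v. \<Sum>i<j. c i * frechet_derivative (\<phi> i) (at z) v)) (at z)" for z
    using assms unfolding test_fun_def
    by (intro has_derivative_sum has_derivative_mult_right) (auto simp: frechet_derivative_works)
  have fd: "frechet_derivative (\<lambda>x. \<Sum>i<j. c i * \<phi> i x) (at z)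
            = (\<lambda>v. \<Sum>i<j. c i * frechet_derivative (\<phi> i) (at z) v)" for z
    using frechet_derivative_at[OF d] by simp
  define K where "K = (\<Union>i<j. tsupp (\<phi> i))"
  have K: "compact K" "K \<subseteq> U"
    using assms unfolding K_def test_fun_def by (blast intro: compact_UN)+
  have "{x. (\<Sum>i<j. c i * \<phi> i x) \<noteq> 0} \<subseteq> K"
  proof
    fix x assume "x \<in> {x. (\<Sum>i<j. c i * \<phi> i x) \<noteq> 0}"
    then obtain i where "i < j" "\<phi> i x \<noteq> 0"
      by (metis (mono_tags, lifting) mem_Collect_eq mult_zero_right sum.neutral lessThan_iff)
    then show "x \<in> K" unfolding K_def using not_in_tsupp by blast
  qed
  note supp = compact_tsupp_subset[OF K(1) this]
  show ?thesis
    unfolding test_fun_def fd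
  proof (intro conjI allI)
    show "(\<lambda>x. \<Sum>i<j. c i * \<phi> i x) differentiable at z" for z using d by (rule differentiableI)
    show "continuous_on UNIV (\<lambda>z. \<Sum>i<j. c i * frechet_derivative (\<phi> i) (at z) v)" for v
      using assms unfolding test_fun_def by (intro continuous_on_sum continuous_on_mult_left) auto
    show "compact (tsupp (\<lambda>x. \<Sum>i<j. c i * \<phi> i x))" by (rule supp(1))
    show "tsupp (\<lambda>x. \<Sum>i<j. c i * \<phi> i x) \<subseteq> U" using supp(2) K(2) by (rule order_trans)
  qed
qed

lemma test_fun_real_deriv:
  fixes u :: "real \<Rightarrow> real"
  assumes "test_fun u UNIV"
  shows "(u has_real_derivative deriv u x) (at x)" "continuous_on UNIV (deriv u)"
proof -
  have frechet: "(u has_real_derivative frechet_derivative u (at y) 1) (at y)" for y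
  proof (rule has_derivative_imp_has_field_derivative)
    show d: "(u has_derivative frechet_derivative u (at y)) (at y)"
      using assms unfolding test_fun_def by (simp add: frechet_derivative_works)
    show "h * frechet_derivative u (at y) 1 = frechet_derivative u (at y) h" for h
      using linear_scale_real[OF has_derivative_linear[OF d], of h 1] by simp
  qed
  have deriv_eq: "deriv u = (\<lambda>y. frechet_derivative u (at y) 1)"
    using DERIV_imp_deriv[OF frechet] by (simp add: fun_eq_iff)
  show "(u has_real_derivative deriv u x) (at x)"
    unfolding deriv_eq by (rule frechet)
  show "continuous_on UNIV (deriv u)"
    using assms unfolding deriv_eq test_fun_def by blast
qed

lemma has_derivative_tensor_product:
  fixes u k :: "real \<Rightarrow> real"
  assumes "\<And>x. (u has_real_derivative u' x) (at x)" "\<And>x. (k has_real_derivative k' x) (at x)"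
  shows "((\<lambda>z. u (fst z) * k (snd z)) has_derivative
           (\<lambda>h. fst h * u' (fst z) * k (snd z) + u (fst z) * (snd h * k' (snd z)))) (at z)"
proof -
  have du: "((\<lambda>z. u (fst z)) has_derivative (\<lambda>h. fst h * u' (fst z))) (at z)"
    using has_derivative_compose[OF has_derivative_fst[OF has_derivative_ident]
          assms(1)[of "fst z", unfolded has_field_derivative_def]]
    by (simp add: mult.commute)
  have dk: "((\<lambda>z. k (snd z)) has_derivative (\<lambda>h. snd h * k' (snd z))) (at z)"
    using has_derivative_compose[OF has_derivative_snd[OF has_derivative_ident]
          assms(2)[of "snd z", unfolded has_field_derivative_def]]
    by (simp add: mult.commute)
  show ?thesis using has_derivative_mult[OF du dk] by (simp add: algebra_simps)
qed

lemma ds_dt_tensor_product: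
  fixes u k :: "real \<Rightarrow> real"
  assumes "\<And>x. (u has_real_derivative u' x) (at x)" "\<And>x. (k has_real_derivative k' x) (at x)"
  shows "ds (\<lambda>z. u (fst z) * k (snd z)) z = u' (fst z) * k (snd z)"
    and "dt (\<lambda>z. u (fst z) * k (snd z)) z = u (fst z) * k' (snd z)"
  unfolding ds_def dt_def frechet_derivative_at[OF has_derivative_tensor_product[OF assms], symmetric]
  by simp_all

lemma continuous_on_compose_fst_snd:
  fixes f :: "real \<Rightarrow> real"
  assumes "continuous_on UNIV f"
  shows "continuous_on UNIV (\<lambda>z::real \<times> real. f (fst z))" "continuous_on UNIV (\<lambda>z::real \<times> real. f (snd z))"
  by (auto intro!: continuous_on_compose2[OF assms] continuous_on_fst continuous_on_snd)

lemma test_fun_tensor_cutoff: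
  fixes u :: "real \<Rightarrow> real"
  assumes u: "test_fun u UNIV" and \<eta>: "0 < \<eta>" "\<eta> \<le> 1"
  shows "test_fun (\<lambda>z. u (fst z) * cutoff \<eta> (snd z)) Lambda"
proof -
  define \<psi> where "\<psi> = (\<lambda>z::real \<times> real. u (fst z) * cutoff \<eta> (snd z))"
  note du = test_fun_real_deriv[OF u]
  note d\<psi> = has_derivative_tensor_product[OF du(1) cutoff_has_real_derivative[OF \<eta>], folded \<psi>_def]
  have cu: "continuous_on UNIV u"
    using du(1) by (intro continuous_at_imp_continuous_on) (auto intro: DERIV_isCont)
  define K where "K = tsupp u \<times> {-(1 - \<eta>/2)..1 - \<eta>/2}"
  have K: "compact K" "K \<subseteq> Lambda"
    using u \<eta> unfolding K_def Lambda_def test_fun_def by (auto intro!: compact_Times)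
  have "{z. \<psi> z \<noteq> 0} \<subseteq> K"
  proof
    fix z assume "z \<in> {z. \<psi> z \<noteq> 0}"
    then have "u (fst z) \<noteq> 0" "cutoff \<eta> (snd z) \<noteq> 0" unfolding \<psi>_def by auto
    moreover have "\<bar>snd z\<bar> \<le> 1 - \<eta>/2"
      using calculation(2) cutoff_vanishes_near_boundary(1)[OF \<eta>, of "snd z"] by force
    ultimately show "z \<in> K"
      using not_in_tsupp[of "fst z" u] unfolding K_def by (cases z) (auto simp: abs_le_iff)
  qed
  note supp = compact_tsupp_subset[OF K(1) this]
  have fd: "frechet_derivative \<psi> (at z) = (\<lambda>h. fst h * deriv u (fst z) * cutoff \<eta> (snd z)
              + u (fst z) * (snd h * cutoff_deriv \<eta> (snd z)))" for z
    using frechet_derivative_at[OF d\<psi>] by simp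
  show ?thesis
    unfolding \<psi>_def[symmetric] test_fun_def
  proof (intro conjI allI)
    show "\<psi> differentiable at z" for z using d\<psi> by (rule differentiableI)
    show "continuous_on UNIV (\<lambda>z. frechet_derivative \<psi> (at z) v)" for v
      unfolding fd
      by (intro continuous_intros continuous_on_compose_fst_snd(1)[OF cu]
          continuous_on_compose_fst_snd(1)[OF du(2)]
          continuous_on_compose_fst_snd(2)[OF continuous_on_cutoff[OF \<eta>(1)]]
          continuous_on_compose_fst_snd(2)[OF continuous_on_cutoff_deriv[OF \<eta>(1)]])
    show "compact (tsupp \<psi>)" by (rule supp(1))
    show "tsupp \<psi> \<subseteq> Lambda" using supp(2) K(2) by (rule order_trans)
  qed
qed

lemma integral_sq_pos:
  fixes u :: "real \<Rightarrow> real"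
  assumes "continuous_on UNIV u" "integrable lborel (\<lambda>x. (u x)\<^sup>2)" "u x0 \<noteq> 0"
  shows "0 < (\<integral>x. (u x)\<^sup>2 \<partial>lborel)"
proof -
  define e where "e = \<bar>u x0\<bar> / 2"
  have e: "e > 0" using assms(3) unfolding e_def by simp
  have "isCont u x0" using assms(1) by (simp add: continuous_on_eq_continuous_at)
  then obtain r where r: "r > 0" "\<And>x. dist x x0 < r \<Longrightarrow> dist (u x) (u x0) < e"
    using e unfolding continuous_at_eps_delta by blast
  have lower: "e\<^sup>2 \<le> (u x)\<^sup>2" if "dist x x0 < r" for x
  proof -
    have "e \<le> \<bar>u x\<bar>" using r(2)[OF that] unfolding e_def dist_real_def by linarith
    then show ?thesis using e by (metis abs_le_square_iff abs_of_pos)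
  qed
  have "(\<integral>x. indicator {x0 - r/2..x0 + r/2} x *\<^sub>R e\<^sup>2 \<partial>lborel) \<le> (\<integral>x. (u x)\<^sup>2 \<partial>lborel)"
  proof (intro integral_mono assms(2))
    show "integrable lborel (\<lambda>x. indicator {x0 - r/2..x0 + r/2} x *\<^sub>R e\<^sup>2)"
      by (intro borel_integrable_compact compact_Icc continuous_on_const)
    show "indicator {x0 - r/2..x0 + r/2} x *\<^sub>R e\<^sup>2 \<le> (u x)\<^sup>2" for x
      using lower[of x] r(1) by (auto simp: indicator_def dist_real_def)
  qed
  moreover have "(\<integral>x. indicator {x0 - r/2..x0 + r/2} x *\<^sub>R e\<^sup>2 \<partial>lborel) = r * e\<^sup>2"
    using r(1) by (simp add: integral_indicator)
  moreover have "0 < r * e\<^sup>2" using r(1) e by simp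
  ultimately show ?thesis by linarith
qed

section \<open>The Rayleigh quotient of a product trial function\<close>

lemma integral_le_by_fibers:
  fixes f :: "real \<times> real \<Rightarrow> real"
  assumes "integrable lborel f" "integrable lborel G" "\<And>s. (\<integral>t. f (s, t) \<partial>lborel) \<le> G s"
  shows "integral\<^sup>L lborel f \<le> integral\<^sup>L lborel G"
proof -
  have f: "integrable (lborel \<Otimes>\<^sub>M lborel) f" using assms(1) by (simp add: lborel_prod)
  have "integral\<^sup>L lborel f = (\<integral>s. (\<integral>t. f (s, t) \<partial>lborel) \<partial>lborel)"
    using lborel_pair.integral_fst'[OF f] by (simp add: lborel_prod)
  also have "\<dots> \<le> integral\<^sup>L lborel G"
    by (rule integral_mono[OF lborel_pair.integrable_fst'[OF f] assms(2,3)])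
  finally show ?thesis .
qed

text \<open>The three terms come from the mass defect \<open>1 - 8\<eta>\<close> of the cutoff, the remainder of the
  second-order expansion of the weight, and the cutoff error of the energy density.\<close>
definition cutoff_error :: "real \<Rightarrow> real \<Rightarrow> real \<Rightarrow> real" where
  "cutoff_error \<epsilon> \<eta> W = 4*\<eta>*\<epsilon>\<^sup>2*W\<^sup>2 + (pi\<^sup>2/16)*(W\<^sup>2*\<epsilon>\<^sup>2)\<^sup>2 + 2*pi\<^sup>2*\<eta>*(1 + W\<^sup>2*\<epsilon>\<^sup>2/2)"

lemma transversal_error_le:
  fixes \<omega> W \<epsilon> \<eta> E M :: real
  assumes "0 \<le> \<omega>" "\<omega> \<le> W" "0 < \<eta>" "1 - 8*\<eta> \<le> M" "1/2 \<le> M" "0 \<le> E"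
    and "cutoff_error \<epsilon> \<eta> W \<le> \<epsilon>\<^sup>2 * E / 2"
  shows "\<omega>\<^sup>2*\<epsilon>\<^sup>2/2 + (pi\<^sup>2/16)*(\<omega>\<^sup>2*\<epsilon>\<^sup>2)\<^sup>2 + 2*pi\<^sup>2*\<eta>*(1 + \<omega>\<^sup>2*\<epsilon>\<^sup>2/2) \<le> \<epsilon>\<^sup>2 * M * (\<omega>\<^sup>2/2 + E)"
proof -
  define X where "X = \<omega>\<^sup>2 * \<epsilon>\<^sup>2"
  define Y where "Y = W\<^sup>2 * \<epsilon>\<^sup>2"
  define Z where "Z = \<epsilon>\<^sup>2 * E"
  define p where "p = pi\<^sup>2"
  have X: "0 \<le> X" "X \<le> Y"
    unfolding X_def Y_def using assms(1,2) by (auto intro!: mult_right_mono power_mono)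
  have "X\<^sup>2 \<le> Y\<^sup>2" using X by (simp add: power_mono)
  then have XY: "p*(\<eta>*X) \<le> p*(\<eta>*Y)" "p*X\<^sup>2 \<le> p*Y\<^sup>2" "\<eta>*X \<le> \<eta>*Y"
    using X assms(3) unfolding p_def by (auto intro!: mult_left_mono)
  have budget: "4*(\<eta>*Y) + p*Y\<^sup>2/16 + 2*p*\<eta> + p*(\<eta>*Y) \<le> Z/2"
    using assms(7) unfolding cutoff_error_def Y_def p_def Z_def by (simp add: algebra_simps)
  have "X/2 - 4*(\<eta>*X) \<le> M*X/2"
    using mult_right_mono[OF assms(4) X(1)] by (simp add: algebra_simps)
  moreover have "Z/2 \<le> M*Z"
    using mult_right_mono[OF assms(5), of Z] assms(6) unfolding Z_def by (simp add: algebra_simps)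
  moreover have "\<omega>\<^sup>2*\<epsilon>\<^sup>2/2 + (pi\<^sup>2/16)*(\<omega>\<^sup>2*\<epsilon>\<^sup>2)\<^sup>2 + 2*pi\<^sup>2*\<eta>*(1 + \<omega>\<^sup>2*\<epsilon>\<^sup>2/2)
      = X/2 + p*X\<^sup>2/16 + 2*p*\<eta> + p*(\<eta>*X)"
    unfolding X_def p_def by (simp add: algebra_simps)
  moreover have "\<epsilon>\<^sup>2 * M * (\<omega>\<^sup>2/2 + E) = M*X/2 + M*Z"
    unfolding X_def Z_def by (simp add: algebra_simps)
  ultimately show ?thesis using XY budget by linarith
qed

lemma cutoff_weighted_integrals:
  assumes \<eta>: "0 < \<eta>" "\<eta> \<le> 1" and "0 \<le> A"
  defines "g \<equiv> \<lambda>t. sqrt (1 + A * t\<^sup>2)"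
  shows "integrable lborel (\<lambda>t. (cutoff \<eta> t)\<^sup>2 / g t)"
    and "integrable lborel (\<lambda>t. (cutoff_deriv \<eta> t)\<^sup>2 * g t)"
    and "integrable lborel (\<lambda>t. (cutoff \<eta> t)\<^sup>2 * g t)"
    and "(\<integral>t. (cutoff \<eta> t)\<^sup>2 / g t \<partial>lborel) \<le> (\<integral>t. (cutoff \<eta> t)\<^sup>2 \<partial>lborel)"
    and "(\<integral>t. (cutoff \<eta> t)\<^sup>2 \<partial>lborel) \<le> (\<integral>t. (cutoff \<eta> t)\<^sup>2 * g t \<partial>lborel)"
proof -
  have g1: "1 \<le> g t" for t unfolding g_def using assms(3) by simp
  have cg: "continuous_on UNIV g" unfolding g_def by (intro continuous_intros)
  have gnz: "\<forall>t\<in>UNIV. g t \<noteq> 0" using g1 by (metis not_one_le_zero)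
  note cc = continuous_on_cutoff[OF \<eta>(1)] continuous_on_cutoff_deriv[OF \<eta>(1)]
  show int: "integrable lborel (\<lambda>t. (cutoff \<eta> t)\<^sup>2 / g t)"
    "integrable lborel (\<lambda>t. (cutoff_deriv \<eta> t)\<^sup>2 * g t)"
    "integrable lborel (\<lambda>t. (cutoff \<eta> t)\<^sup>2 * g t)"
    by (intro integrable_cutoff_combination[OF \<eta>] continuous_intros cc cg gnz; simp)+
  have int0: "integrable lborel (\<lambda>t. (cutoff \<eta> t)\<^sup>2)"
    by (intro integrable_cutoff_combination[OF \<eta>] continuous_intros cc; simp)
  have "(cutoff \<eta> t)\<^sup>2 / g t \<le> (cutoff \<eta> t)\<^sup>2" for t
    using g1[of t] order.strict_trans2[OF zero_less_one g1[of t]]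
    by (simp add: divide_le_eq mult_le_cancel_left1)
  then show "(\<integral>t. (cutoff \<eta> t)\<^sup>2 / g t \<partial>lborel) \<le> (\<integral>t. (cutoff \<eta> t)\<^sup>2 \<partial>lborel)"
    by (intro integral_mono[OF int(1) int0])
  show "(\<integral>t. (cutoff \<eta> t)\<^sup>2 \<partial>lborel) \<le> (\<integral>t. (cutoff \<eta> t)\<^sup>2 * g t \<partial>lborel)"
    using mult_left_mono[OF g1] by (intro integral_mono[OF int0 int(3)]) fastforce
qed

text \<open>One fiber \<open>s = const\<close> of the strip form, with \<open>\<alpha> = u s\<close>, \<open>\<beta> = u' s\<close>, \<open>\<omega> = w s\<close>.\<close>
lemma cutoff_fiber_estimate:
  fixes \<alpha> \<beta> \<omega> \<epsilon> \<eta> W E R :: real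
  assumes \<omega>: "0 \<le> \<omega>" "\<omega> \<le> W" and \<epsilon>: "0 < \<epsilon>" and \<eta>: "0 < \<eta>" "\<eta> \<le> 1/16"
    and E: "0 \<le> E" and R: "0 \<le> R" and budget: "cutoff_error \<epsilon> \<eta> W \<le> \<epsilon>\<^sup>2 * E / 2"
  defines "g \<equiv> \<lambda>t. sqrt (1 + \<omega>\<^sup>2 * \<epsilon>\<^sup>2 * t\<^sup>2)"
    and "M \<equiv> \<integral>t. (cutoff \<eta> t)\<^sup>2 \<partial>lborel"
  shows "(\<integral>t. \<epsilon> * \<beta>\<^sup>2 * (cutoff \<eta> t)\<^sup>2 / g t + \<alpha>\<^sup>2 * (cutoff_deriv \<eta> t)\<^sup>2 * g t / \<epsilon>
              - ((pi/(2*\<epsilon>))\<^sup>2 + R + E) * (\<epsilon> * \<alpha>\<^sup>2 * (cutoff \<eta> t)\<^sup>2 * g t) \<partial>lborel)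
         \<le> \<epsilon> * M * (\<beta>\<^sup>2 + (\<omega>\<^sup>2/2 - R) * \<alpha>\<^sup>2)"
proof -
  have \<eta>1: "\<eta> \<le> 1" using \<eta> by simp
  define F1 where "F1 t = (cutoff \<eta> t)\<^sup>2 / g t" for t
  define F2 where "F2 t = (cutoff_deriv \<eta> t)\<^sup>2 * g t" for t
  define F3 where "F3 t = (cutoff \<eta> t)\<^sup>2 * g t" for t
  define I1 where "I1 = integral\<^sup>L lborel F1"
  define I2 where "I2 = integral\<^sup>L lborel F2"
  define I3 where "I3 = integral\<^sup>L lborel F3"
  note weighted = cutoff_weighted_integrals[OF \<eta>(1) \<eta>1, of "\<omega>\<^sup>2 * \<epsilon>\<^sup>2"]
  have int: "integrable lborel F1" "integrable lborel F2" "integrable lborel F3"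
    and I1: "I1 \<le> M" and I3: "M \<le> I3"
    using weighted unfolding F1_def F2_def F3_def I1_def I3_def M_def g_def by simp_all
  define \<Lambda> where "\<Lambda> = (pi/(2*\<epsilon>))\<^sup>2 + R + E"
  have "\<epsilon> * \<beta>\<^sup>2 * (cutoff \<eta> t)\<^sup>2 / g t + \<alpha>\<^sup>2 * (cutoff_deriv \<eta> t)\<^sup>2 * g t / \<epsilon>
          - \<Lambda> * (\<epsilon> * \<alpha>\<^sup>2 * (cutoff \<eta> t)\<^sup>2 * g t)
      = \<epsilon> * \<beta>\<^sup>2 * F1 t + (\<alpha>\<^sup>2/\<epsilon>) * F2 t - (\<Lambda> * \<epsilon> * \<alpha>\<^sup>2) * F3 t" for t
    unfolding F1_def F2_def F3_def by (simp add: algebra_simps)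
  then have "(\<integral>t. \<epsilon> * \<beta>\<^sup>2 * (cutoff \<eta> t)\<^sup>2 / g t + \<alpha>\<^sup>2 * (cutoff_deriv \<eta> t)\<^sup>2 * g t / \<epsilon>
          - \<Lambda> * (\<epsilon> * \<alpha>\<^sup>2 * (cutoff \<eta> t)\<^sup>2 * g t) \<partial>lborel)
      = \<epsilon> * \<beta>\<^sup>2 * I1 + (\<alpha>\<^sup>2/\<epsilon>) * I2 - (\<Lambda> * \<epsilon> * \<alpha>\<^sup>2) * I3"
    using int unfolding I1_def I2_def I3_def by simp
  also have "\<dots> = \<epsilon> * \<beta>\<^sup>2 * I1 + (\<alpha>\<^sup>2/\<epsilon>) * (I2 - (pi\<^sup>2/4) * I3) - (R + E) * \<epsilon> * \<alpha>\<^sup>2 * I3"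
    unfolding \<Lambda>_def using \<epsilon> by (simp add: field_simps power2_eq_square)
  also have "\<dots> \<le> \<epsilon> * \<beta>\<^sup>2 * M + (\<alpha>\<^sup>2/\<epsilon>) * (\<epsilon>\<^sup>2 * M * (\<omega>\<^sup>2/2 + E)) - (R + E) * \<epsilon> * \<alpha>\<^sup>2 * M"
  proof -
    have "I2 - (pi\<^sup>2/4) * I3
        = (\<integral>t. ((cutoff_deriv \<eta> t)\<^sup>2 - (pi\<^sup>2/4) * (cutoff \<eta> t)\<^sup>2) * sqrt (1 + \<omega>\<^sup>2 * \<epsilon>\<^sup>2 * t\<^sup>2) \<partial>lborel)"
      using int(2,3) unfolding I2_def I3_def F2_def F3_def g_def by (simp add: algebra_simps)
    also have "\<dots> \<le> \<omega>\<^sup>2*\<epsilon>\<^sup>2/2 + (pi\<^sup>2/16)*(\<omega>\<^sup>2*\<epsilon>\<^sup>2)\<^sup>2 + 2*pi\<^sup>2*\<eta>*(1 + \<omega>\<^sup>2*\<epsilon>\<^sup>2/2)"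
      using cutoff_weighted_energy_le[OF \<eta>(1) \<eta>1, of "\<omega>\<^sup>2 * \<epsilon>\<^sup>2"] by (simp add: mult.assoc)
    also have "\<dots> \<le> \<epsilon>\<^sup>2 * M * (\<omega>\<^sup>2/2 + E)"
      using cutoff_L2_ge[OF \<eta>(1) \<eta>1] \<eta> E \<omega> budget
      by (intro transversal_error_le) (auto simp: M_def)
    finally have "(\<alpha>\<^sup>2/\<epsilon>) * (I2 - (pi\<^sup>2/4) * I3) \<le> (\<alpha>\<^sup>2/\<epsilon>) * (\<epsilon>\<^sup>2 * M * (\<omega>\<^sup>2/2 + E))"
      using \<epsilon> by (intro mult_left_mono) auto
    moreover have "\<epsilon> * \<beta>\<^sup>2 * I1 \<le> \<epsilon> * \<beta>\<^sup>2 * M"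
      using I1 \<epsilon> by (intro mult_left_mono) auto
    moreover have "(R + E) * \<epsilon> * \<alpha>\<^sup>2 * M \<le> (R + E) * \<epsilon> * \<alpha>\<^sup>2 * I3"
      using I3 \<epsilon> E R by (intro mult_left_mono) auto
    ultimately show ?thesis by linarith
  qed
  also have "\<dots> = \<epsilon> * M * (\<beta>\<^sup>2 + (\<omega>\<^sup>2/2 - R) * \<alpha>\<^sup>2)"
    using \<epsilon> by (simp add: field_simps power2_eq_square)
  finally show ?thesis unfolding \<Lambda>_def .
qed

lemma ftil_ge_1: "1 \<le> ftil \<epsilon> w z"
  unfolding ftil_def by simp

lemma continuous_on_ftil:
  assumes "continuous_on UNIV w"
  shows "continuous_on UNIV (ftil \<epsilon> w)"
  unfolding ftil_def[abs_def]
  by (intro continuous_intros continuous_on_compose_fst_snd(1)[OF assms])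

lemma strip_Q_tensor_product:
  fixes u k :: "real \<Rightarrow> real"
  assumes "\<And>x. (u has_real_derivative u' x) (at x)" "\<And>x. (k has_real_derivative k' x) (at x)"
    and "0 < \<epsilon>"
  shows "strip_Q \<epsilon> w (\<lambda>z. u (fst z) * k (snd z))
       = (\<integral>z. \<epsilon> * (u' (fst z))\<^sup>2 * (k (snd z))\<^sup>2 / ftil \<epsilon> w z
              + (u (fst z))\<^sup>2 * (k' (snd z))\<^sup>2 * ftil \<epsilon> w z / \<epsilon> \<partial>lborel)"
proof -
  have "((u' (fst z) * k (snd z))\<^sup>2 / (ftil \<epsilon> w z)\<^sup>2 + (u (fst z) * k' (snd z))\<^sup>2 / \<epsilon>\<^sup>2) * \<epsilon> * ftil \<epsilon> w z
      = \<epsilon> * (u' (fst z))\<^sup>2 * (k (snd z))\<^sup>2 / ftil \<epsilon> w z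
        + (u (fst z))\<^sup>2 * (k' (snd z))\<^sup>2 * ftil \<epsilon> w z / \<epsilon>" for z
    using ftil_ge_1[of \<epsilon> w z] assms(3) by (simp add: field_simps power2_eq_square)
  then show ?thesis
    unfolding strip_Q_def ds_dt_tensor_product[OF assms(1,2)] by simp
qed

lemma schr_Q_test_fun:
  fixes u V :: "real \<Rightarrow> real"
  assumes "test_fun u UNIV" "continuous_on UNIV V"
  shows "integrable lborel (\<lambda>x. (u x)\<^sup>2)" "integrable lborel (\<lambda>x. (deriv u x)\<^sup>2)"
    and "integrable lborel (\<lambda>x. V x * (u x)\<^sup>2)"
    and "schr_Q V u = (\<integral>x. (deriv u x)\<^sup>2 \<partial>lborel) + (\<integral>x. V x * (u x)\<^sup>2 \<partial>lborel)"
proof -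
  note du = test_fun_real_deriv[OF assms(1)]
  have cu: "continuous_on UNIV u"
    using du(1) by (intro continuous_at_imp_continuous_on) (auto intro: DERIV_isCont)
  have S: "compact (tsupp u)" using assms(1) unfolding test_fun_def by simp
  have out: "u x = 0" "deriv u x = 0" if "x \<notin> tsupp u" for x
    using not_in_tsupp[OF that] has_real_derivative_outside_tsupp[OF du(1) that] by auto
  show "integrable lborel (\<lambda>x. (u x)\<^sup>2)" "integrable lborel (\<lambda>x. (deriv u x)\<^sup>2)"
    "integrable lborel (\<lambda>x. V x * (u x)\<^sup>2)"
    by (intro integrable_continuous_vanishing_outside[OF _ S] continuous_intros cu du(2) assms(2);
        simp add: out)+
  then show "schr_Q V u = (\<integral>x. (deriv u x)\<^sup>2 \<partial>lborel) + (\<integral>x. V x * (u x)\<^sup>2 \<partial>lborel)"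
    unfolding schr_Q_def by simp
qed

lemma integrable_strip_tensor_cutoff:
  fixes u w :: "real \<Rightarrow> real"
  assumes u: "test_fun u UNIV" and w: "continuous_on UNIV w"
    and \<epsilon>: "0 < \<epsilon>" and \<eta>: "0 < \<eta>" "\<eta> \<le> 1"
  defines "QI \<equiv> \<lambda>z. \<epsilon> * (deriv u (fst z))\<^sup>2 * (cutoff \<eta> (snd z))\<^sup>2 / ftil \<epsilon> w z
                      + (u (fst z))\<^sup>2 * (cutoff_deriv \<eta> (snd z))\<^sup>2 * ftil \<epsilon> w z / \<epsilon>"
    and "NI \<equiv> \<lambda>z. (u (fst z) * cutoff \<eta> (snd z))\<^sup>2 * \<epsilon> * ftil \<epsilon> w z"
  shows "integrable lborel QI" "integrable lborel NI"
proof -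
  note du = test_fun_real_deriv[OF u]
  have cu: "continuous_on UNIV u"
    using du(1) by (intro continuous_at_imp_continuous_on) (auto intro: DERIV_isCont)
  have S: "compact (tsupp u \<times> {-1..1::real})" using u unfolding test_fun_def by (auto intro: compact_Times)
  have out: "u (fst z) = 0 \<and> deriv u (fst z) = 0 \<or> cutoff \<eta> (snd z) = 0 \<and> cutoff_deriv \<eta> (snd z) = 0"
    if "z \<notin> tsupp u \<times> {-1..1}" for z
  proof (cases "fst z \<in> tsupp u")
    case True
    then have "1 - \<eta>/2 < \<bar>snd z\<bar>" using that \<eta> by (cases z) auto
    then show ?thesis using cutoff_vanishes_near_boundary[OF \<eta>] by auto
  next
    case False
    then show ?thesis using not_in_tsupp has_real_derivative_outside_tsupp[OF du(1)] by auto
  qed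
  have ftil: "continuous_on UNIV (ftil \<epsilon> w)" "\<forall>z\<in>UNIV. ftil \<epsilon> w z \<noteq> 0"
    using continuous_on_ftil[OF w] ftil_ge_1 by (metis not_one_le_zero)+
  note fst_snd = continuous_on_compose_fst_snd(1)[OF cu] continuous_on_compose_fst_snd(1)[OF du(2)]
    continuous_on_compose_fst_snd(2)[OF continuous_on_cutoff[OF \<eta>(1)]]
    continuous_on_compose_fst_snd(2)[OF continuous_on_cutoff_deriv[OF \<eta>(1)]]
  show "integrable lborel QI"
  proof (rule integrable_continuous_vanishing_outside[OF _ S])
    show "continuous_on UNIV QI" unfolding QI_def using \<epsilon> by (intro continuous_intros fst_snd ftil) auto
    show "QI z = 0" if "z \<notin> tsupp u \<times> {-1..1}" for z using out[OF that] unfolding QI_def by auto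
  qed
  show "integrable lborel NI"
  proof (rule integrable_continuous_vanishing_outside[OF _ S])
    show "continuous_on UNIV NI" unfolding NI_def by (intro continuous_intros fst_snd ftil)
    show "NI z = 0" if "z \<notin> tsupp u \<times> {-1..1}" for z using out[OF that] unfolding NI_def by auto
  qed
qed

lemma strip_form_tensor_cutoff_le:
  fixes u w :: "real \<Rightarrow> real"
  assumes u: "test_fun u UNIV"
    and w: "continuous_on UNIV w" "\<And>s. 0 \<le> w s" "\<And>s. w s \<le> W"
    and \<epsilon>: "0 < \<epsilon>" and \<eta>: "0 < \<eta>" "\<eta> \<le> 1/16" and E: "0 \<le> E" and R: "0 \<le> R"
    and budget: "cutoff_error \<epsilon> \<eta> W \<le> \<epsilon>\<^sup>2 * E / 2"
  defines "\<psi> \<equiv> \<lambda>z. u (fst z) * cutoff \<eta> (snd z)"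
  shows "strip_Q \<epsilon> w \<psi> - ((pi/(2*\<epsilon>))\<^sup>2 + R + E) * strip_N \<epsilon> w \<psi>
         \<le> \<epsilon> * (\<integral>t. (cutoff \<eta> t)\<^sup>2 \<partial>lborel) * (schr_Q (\<lambda>s. (w s)\<^sup>2/2) u - R * L2_N u)"
proof -
  have \<eta>1: "\<eta> \<le> 1" using \<eta> by simp
  note du = test_fun_real_deriv[OF u]
  define V where "V s = (w s)\<^sup>2/2" for s
  have "continuous_on UNIV V" unfolding V_def[abs_def] using w(1) by (intro continuous_intros) auto
  note schr = schr_Q_test_fun[OF u this]
  define M where "M = (\<integral>t. (cutoff \<eta> t)\<^sup>2 \<partial>lborel)"
  define \<Lambda> where "\<Lambda> = (pi/(2*\<epsilon>))\<^sup>2 + R + E"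
  define QI where "QI z = \<epsilon> * (deriv u (fst z))\<^sup>2 * (cutoff \<eta> (snd z))\<^sup>2 / ftil \<epsilon> w z
      + (u (fst z))\<^sup>2 * (cutoff_deriv \<eta> (snd z))\<^sup>2 * ftil \<epsilon> w z / \<epsilon>" for z
  define NI where "NI z = (\<psi> z)\<^sup>2 * \<epsilon> * ftil \<epsilon> w z" for z
  have integrable: "integrable lborel QI" "integrable lborel NI"
    unfolding QI_def[abs_def] NI_def[abs_def] \<psi>_def
    by (rule integrable_strip_tensor_cutoff[OF u w(1) \<epsilon> \<eta>(1) \<eta>1])+
  have "strip_Q \<epsilon> w \<psi> = integral\<^sup>L lborel QI"
    unfolding \<psi>_def QI_def[abs_def]
    by (rule strip_Q_tensor_product[OF du(1) cutoff_has_real_derivative[OF \<eta>(1) \<eta>1] \<epsilon>])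
  moreover have "strip_N \<epsilon> w \<psi> = integral\<^sup>L lborel NI"
    unfolding strip_N_def NI_def ..
  ultimately have "strip_Q \<epsilon> w \<psi> - \<Lambda> * strip_N \<epsilon> w \<psi> = (\<integral>z. QI z - \<Lambda> * NI z \<partial>lborel)"
    using integrable by simp
  also have "\<dots> \<le> (\<integral>s. \<epsilon> * M * ((deriv u s)\<^sup>2 + (V s - R) * (u s)\<^sup>2) \<partial>lborel)"
  proof (rule integral_le_by_fibers)
    show "(\<integral>t. QI (s, t) - \<Lambda> * NI (s, t) \<partial>lborel) \<le> \<epsilon> * M * ((deriv u s)\<^sup>2 + (V s - R) * (u s)\<^sup>2)"
      for s
    proof -
      have "QI (s, t) - \<Lambda> * NI (s, t)
          = \<epsilon> * (deriv u s)\<^sup>2 * (cutoff \<eta> t)\<^sup>2 / sqrt (1 + (w s)\<^sup>2 * \<epsilon>\<^sup>2 * t\<^sup>2)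
            + (u s)\<^sup>2 * (cutoff_deriv \<eta> t)\<^sup>2 * sqrt (1 + (w s)\<^sup>2 * \<epsilon>\<^sup>2 * t\<^sup>2) / \<epsilon>
            - \<Lambda> * (\<epsilon> * (u s)\<^sup>2 * (cutoff \<eta> t)\<^sup>2 * sqrt (1 + (w s)\<^sup>2 * \<epsilon>\<^sup>2 * t\<^sup>2))" for t
        unfolding QI_def NI_def \<psi>_def ftil_def by (simp add: power_mult_distrib algebra_simps)
      then show ?thesis
        unfolding \<Lambda>_def M_def V_def
        using cutoff_fiber_estimate[OF w(2,3) \<epsilon> \<eta> E R budget] by simp
    qed
  qed (use integrable schr(1-3) in \<open>auto simp: algebra_simps\<close>)
  also have "\<dots> = \<epsilon> * M * (schr_Q V u - R * L2_N u)"
    using schr unfolding L2_N_def by (simp add: algebra_simps)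
  finally show ?thesis unfolding \<Lambda>_def M_def V_def .
qed

lemma rayleigh_tensor_cutoff_le:
  fixes u w :: "real \<Rightarrow> real"
  assumes u: "test_fun u UNIV" "u x0 \<noteq> 0"
    and w: "continuous_on UNIV w" "\<And>s. 0 \<le> w s" "\<And>s. w s \<le> W"
    and \<epsilon>: "0 < \<epsilon>" and \<eta>: "0 < \<eta>" "\<eta> \<le> 1/16" and E: "0 \<le> E"
    and budget: "cutoff_error \<epsilon> \<eta> W \<le> \<epsilon>\<^sup>2 * E / 2"
  defines "\<psi> \<equiv> \<lambda>z. u (fst z) * cutoff \<eta> (snd z)"
  shows "strip_Q \<epsilon> w \<psi> / strip_N \<epsilon> w \<psi> \<le> schr_Q (\<lambda>s. (w s)\<^sup>2/2) u / L2_N u + (pi/(2*\<epsilon>))\<^sup>2 + E"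
proof -
  define V where "V s = (w s)\<^sup>2/2" for s
  have "continuous_on UNIV V" unfolding V_def[abs_def] using w(1) by (intro continuous_intros) auto
  note schr = schr_Q_test_fun[OF u(1) this]
  have "continuous_on UNIV u"
    using test_fun_real_deriv(1)[OF u(1)]
    by (intro continuous_at_imp_continuous_on) (auto intro: DERIV_isCont)
  then have L: "0 < L2_N u" unfolding L2_N_def by (rule integral_sq_pos[OF _ schr(1) u(2)])
  define R where "R = schr_Q V u / L2_N u"
  have R: "0 \<le> R"
    unfolding R_def schr_Q_def V_def using L by (intro divide_nonneg_pos integral_nonneg_AE) auto
  define \<Lambda> where "\<Lambda> = (pi/(2*\<epsilon>))\<^sup>2 + R + E"
  have "strip_Q \<epsilon> w \<psi> - \<Lambda> * strip_N \<epsilon> w \<psi> \<le> 0"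
    using strip_form_tensor_cutoff_le[OF u(1) w \<epsilon> \<eta> E R budget] L
    unfolding \<Lambda>_def \<psi>_def R_def V_def by simp
  moreover have "0 \<le> strip_N \<epsilon> w \<psi>"
    unfolding strip_N_def using \<epsilon>
    by (intro integral_nonneg_AE AE_I2 mult_nonneg_nonneg) (auto intro: order.trans[OF zero_le_one ftil_ge_1])
  moreover have "0 \<le> \<Lambda>" unfolding \<Lambda>_def using R E by simp
  ultimately have "strip_Q \<epsilon> w \<psi> / strip_N \<epsilon> w \<psi> \<le> \<Lambda>"
    by (cases "strip_N \<epsilon> w \<psi> = 0") (auto simp: divide_le_eq)
  then show ?thesis unfolding \<Lambda>_def R_def V_def by (simp add: algebra_simps)
qed

section \<open>Min-max comparison and choice of the cutoff\<close>

lemma minmax_le_transfer: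
  fixes \<Psi> :: "(nat \<Rightarrow> 'a \<Rightarrow> real) \<Rightarrow> nat \<Rightarrow> 'b \<Rightarrow> real"
  assumes trial: "\<And>\<phi> i. \<forall>i<j. T1 (\<phi> i) \<Longrightarrow>
      \<forall>c. (\<forall>x. (\<Sum>i<j. c i * \<phi> i x) = 0) \<longrightarrow> (\<forall>i<j. c i = 0) \<Longrightarrow> i < j \<Longrightarrow> T2 (\<Psi> \<phi> i)"
    and indep: "\<And>\<phi> c. \<forall>i<j. T1 (\<phi> i) \<Longrightarrow>
      \<forall>c. (\<forall>x. (\<Sum>i<j. c i * \<phi> i x) = 0) \<longrightarrow> (\<forall>i<j. c i = 0) \<Longrightarrow>
      \<forall>x. (\<Sum>i<j. c i * \<Psi> \<phi> i x) = 0 \<Longrightarrow> \<forall>i<j. c i = 0"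
    and rayleigh: "\<And>\<phi> c. \<forall>i<j. T1 (\<phi> i) \<Longrightarrow>
      \<forall>c. (\<forall>x. (\<Sum>i<j. c i * \<phi> i x) = 0) \<longrightarrow> (\<forall>i<j. c i = 0) \<Longrightarrow> \<exists>i<j. c i \<noteq> 0 \<Longrightarrow>
      Q2 (\<lambda>x. \<Sum>i<j. c i * \<Psi> \<phi> i x) / N2 (\<lambda>x. \<Sum>i<j. c i * \<Psi> \<phi> i x)
      \<le> Q1 (\<lambda>x. \<Sum>i<j. c i * \<phi> i x) / N1 (\<lambda>x. \<Sum>i<j. c i * \<phi> i x) + k"
  shows "minmax Q2 N2 T2 j \<le> minmax Q1 N1 T1 j + ereal k"
proof -
  define C where "C = {c :: nat \<Rightarrow> real. \<exists>i<j. c i \<noteq> 0}"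
  define rq1 where "rq1 \<phi> c = ereal (Q1 (\<lambda>x. \<Sum>i<j. c i * \<phi> i x) / N1 (\<lambda>x. \<Sum>i<j. c i * \<phi> i x))" for \<phi> c
  define rq2 where "rq2 \<psi> c = ereal (Q2 (\<lambda>x. \<Sum>i<j. c i * \<psi> i x) / N2 (\<lambda>x. \<Sum>i<j. c i * \<psi> i x))" for \<psi> c
  have "minmax Q2 N2 T2 j - ereal k \<le> minmax Q1 N1 T1 j"
    unfolding minmax_def[of Q1] rq1_def[symmetric] C_def[symmetric]
  proof (rule INF_greatest)
    fix \<phi> assume "\<phi> \<in> {\<phi>. (\<forall>i<j. T1 (\<phi> i)) \<and>
                 (\<forall>c. (\<forall>x. (\<Sum>i<j. c i * \<phi> i x) = 0) \<longrightarrow> (\<forall>i<j. c i = 0))}"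
    then have \<phi>: "\<forall>i<j. T1 (\<phi> i)" "\<forall>c. (\<forall>x. (\<Sum>i<j. c i * \<phi> i x) = 0) \<longrightarrow> (\<forall>i<j. c i = 0)"
      by auto
    have "minmax Q2 N2 T2 j \<le> (SUP c\<in>C. rq2 (\<Psi> \<phi>) c)"
      unfolding minmax_def rq2_def C_def using trial[OF \<phi>] indep[OF \<phi>] by (intro INF_lower) auto
    also have "\<dots> \<le> (SUP c\<in>C. rq1 \<phi> c) + ereal k"
    proof (rule SUP_least)
      fix c assume c: "c \<in> C"
      then have "rq2 (\<Psi> \<phi>) c \<le> rq1 \<phi> c + ereal k"
        unfolding rq1_def rq2_def C_def using rayleigh[OF \<phi>] by auto
      also have "\<dots> \<le> (SUP c\<in>C. rq1 \<phi> c) + ereal k"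
        using c by (intro add_right_mono SUP_upper)
      finally show "rq2 (\<Psi> \<phi>) c \<le> (SUP c\<in>C. rq1 \<phi> c) + ereal k" .
    qed
    finally show "minmax Q2 N2 T2 j - ereal k \<le> (SUP c\<in>C. rq1 \<phi> c)"
      by (simp add: ereal_minus_le)
  qed
  then show ?thesis by (simp add: ereal_minus_le)
qed

lemma lam_strip_le_lam_schr:
  fixes w :: "real \<Rightarrow> real"
  assumes w: "continuous_on UNIV w" "\<And>s. 0 \<le> w s" "\<And>s. w s \<le> W"
    and \<epsilon>: "0 < \<epsilon>" and \<eta>: "0 < \<eta>" "\<eta> \<le> 1/16" and E: "0 \<le> E"
    and budget: "cutoff_error \<epsilon> \<eta> W \<le> \<epsilon>\<^sup>2 * E / 2"
  shows "lam_strip \<epsilon> w j \<le> lam_schr (\<lambda>s. (w s)\<^sup>2/2) j + ereal ((pi/(2*\<epsilon>))\<^sup>2 + E)"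
  unfolding lam_strip_def lam_schr_def
proof (rule minmax_le_transfer[where \<Psi> = "\<lambda>\<phi> i z. \<phi> i (fst z) * cutoff \<eta> (snd z)"], goal_cases)
  case (1 \<phi> i)
  then show ?case using \<eta> by (simp add: test_fun_tensor_cutoff)
next
  case (2 \<phi> c)
  then have "(\<Sum>i<j. c i * \<phi> i y) * cutoff \<eta> 0 = 0" for y
    by (simp add: sum_distrib_right mult.assoc)
  then show ?case using 2(2)[rule_format, of c] cutoff_0_neq_0[OF \<eta>] by simp
next
  case (3 \<phi> c)
  then obtain x0 where "(\<Sum>i<j. c i * \<phi> i x0) \<noteq> 0" by blast
  moreover have "(\<lambda>z. \<Sum>i<j. c i * (\<phi> i (fst z) * cutoff \<eta> (snd z)))
      = (\<lambda>z. (\<Sum>i<j. c i * \<phi> i (fst z)) * cutoff \<eta> (snd z))"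
    by (simp add: sum_distrib_right mult.assoc)
  ultimately show ?case
    using rayleigh_tensor_cutoff_le[OF test_fun_lincomb[OF 3(1)] _ w \<epsilon> \<eta> E budget]
    by (simp add: add.assoc)
qed

lemma cutoff_parameter_exists:
  fixes \<epsilon> K0 a d :: real
  assumes \<epsilon>: "0 < \<epsilon>" "\<epsilon> < 1" and d: "2 + d \<le> 4 - 4*a"
  obtains \<eta> where "0 < \<eta>" "\<eta> \<le> 1/16"
    "cutoff_error \<epsilon> \<eta> (K0 * \<epsilon> powr (-a)) \<le> \<epsilon>\<^sup>2 * ((pi\<^sup>2/8 * K0^4 + 2) * \<epsilon> powr d) / 2"
proof -
  define W where "W = K0 * \<epsilon> powr (-a)"
  define D where "D = 4*\<epsilon>\<^sup>2*W\<^sup>2 + 2*pi\<^sup>2 + pi\<^sup>2*\<epsilon>\<^sup>2*W\<^sup>2"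
  have D: "0 < D" unfolding D_def by (intro add_nonneg_pos add_pos_nonneg) auto
  define \<eta> where "\<eta> = min (1/16) (\<epsilon> powr (2+d) / D)"
  have \<eta>_pos: "0 < \<eta>" unfolding \<eta>_def using D \<epsilon> by simp
  have \<eta>_le: "\<eta> \<le> 1/16" unfolding \<eta>_def by (rule min.cobounded1)
  have \<eta>D: "\<eta> * D \<le> \<epsilon> powr (2+d)"
    using D min.cobounded2[of "1/16" "\<epsilon> powr (2+d) / D"] unfolding \<eta>_def by (simp add: le_divide_eq)
  have \<epsilon>2: "\<epsilon>\<^sup>2 = \<epsilon> powr 2" using powr_realpow[OF \<epsilon>(1), of 2] by simp
  have sq: "(\<epsilon> powr x)\<^sup>2 = \<epsilon> powr (2*x)" for x
    by (simp add: power2_eq_square powr_add[symmetric])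
  have "(W\<^sup>2 * \<epsilon>\<^sup>2)\<^sup>2 = K0^4 * \<epsilon> powr (4 - 4*a)"
    unfolding W_def \<epsilon>2 by (simp add: power_mult_distrib sq powr_add[symmetric] algebra_simps)
  also have "\<dots> \<le> K0^4 * \<epsilon> powr (2 + d)"
    using d \<epsilon> by (intro mult_left_mono powr_mono') auto
  finally have "(pi\<^sup>2/16)*(W\<^sup>2*\<epsilon>\<^sup>2)\<^sup>2 \<le> (pi\<^sup>2/16)*(K0^4 * \<epsilon> powr (2 + d))"
    by (intro mult_left_mono) auto
  moreover have "4*\<eta>*\<epsilon>\<^sup>2*W\<^sup>2 + 2*pi\<^sup>2*\<eta>*(1 + W\<^sup>2*\<epsilon>\<^sup>2/2) = \<eta> * D"
    unfolding D_def by (simp add: algebra_simps)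
  moreover have "\<epsilon>\<^sup>2 * ((pi\<^sup>2/8 * K0^4 + 2) * \<epsilon> powr d) / 2
      = (pi\<^sup>2/16)*(K0^4 * \<epsilon> powr (2 + d)) + \<epsilon> powr (2+d)"
    unfolding \<epsilon>2 by (simp add: powr_add algebra_simps)
  ultimately have "cutoff_error \<epsilon> \<eta> W \<le> \<epsilon>\<^sup>2 * ((pi\<^sup>2/8 * K0^4 + 2) * \<epsilon> powr d) / 2"
    using \<eta>D unfolding cutoff_error_def by linarith
  with \<eta>_pos \<eta>_le that show ?thesis unfolding W_def by blast
qed

theorem mainTheorem11:
  fixes a b c K0 e0 :: real
    and \<Theta> \<Theta>' :: "real \<Rightarrow> real ^ 'n"
    and Th Th1 Th2 :: "real \<Rightarrow> real \<Rightarrow> real ^ 'n"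
    and \<nu>1 \<nu>2 :: "real \<Rightarrow> real"
  assumes a_pos: "0 < a" and a_lt: "a < 1/3"
    and b_lt: "b < 1" and ac: "a + c < 2"
    and K0_pos: "K0 > 0" and e0_pos: "e0 > 0"
    \<comment> \<open>Theta is C^{1,1} with |Theta| = 1\<close>
    and Theta_deriv: "\<forall>s. (\<Theta> has_vector_derivative \<Theta>' s) (at s)"
    and Theta_C11: "\<forall>s. \<exists>r>0. \<exists>L. \<forall>x\<in>ball s r. \<forall>y\<in>ball s r.
                       norm (\<Theta>' x - \<Theta>' y) \<le> L * \<bar>x - y\<bar>"
    and Theta_unit: "\<forall>s. norm (\<Theta> s) = 1"
    \<comment> \<open>(I)\<close>
    and I: "filterlim (\<lambda>s. norm (\<Theta>' s)) at_top at_infinity"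
    \<comment> \<open>(II)\<close>
    and II_neg: "\<forall>x y. x < y \<and> y < 0 \<longrightarrow> norm (\<Theta>' y) < norm (\<Theta>' x)"
    and II_pos: "\<forall>x y. 0 < x \<and> x < y \<longrightarrow> norm (\<Theta>' x) < norm (\<Theta>' y)"
    \<comment> \<open>nu_1, nu_2\<close>
    and nu: "\<forall>\<epsilon>. 0 < \<epsilon> \<and> \<epsilon> < e0 \<longrightarrow>
               \<nu>1 \<epsilon> < 0 \<and> 0 < \<nu>2 \<epsilon> \<and>
               norm (\<Theta>' (\<nu>1 \<epsilon>)) = \<epsilon> powr (-a) \<and> norm (\<Theta>' (\<nu>2 \<epsilon>)) = \<epsilon> powr (-a)"
    \<comment> \<open>regularity of Theta_eps (derivatives Th1, Th2)\<close>
    and Th_deriv: "\<forall>\<epsilon> s. 0 < \<epsilon> \<and> \<epsilon> < e0 \<longrightarrow>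
               (Th \<epsilon> has_vector_derivative Th1 \<epsilon> s) (at s) \<and>
               (Th1 \<epsilon> has_vector_derivative Th2 \<epsilon> s) (at s)"
    \<comment> \<open>(III)\<close>
    and III: "\<forall>\<epsilon> s. 0 < \<epsilon> \<and> \<epsilon> < e0 \<and> \<nu>1 \<epsilon> < s \<and> s < \<nu>2 \<epsilon> \<longrightarrow> Th \<epsilon> s = \<Theta> s"
    \<comment> \<open>(IV)\<close>
    and IV: "\<forall>\<epsilon> s. 0 < \<epsilon> \<and> \<epsilon> < e0 \<longrightarrow> norm (Th1 \<epsilon> s) \<le> norm (\<Theta>' s)"
    \<comment> \<open>(V)\<close>
    and V_neg: "\<forall>\<epsilon> x y. 0 < \<epsilon> \<and> \<epsilon> < e0 \<and> x \<le> y \<and> y < 0 \<longrightarrow>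
                  norm (Th1 \<epsilon> y) \<le> norm (Th1 \<epsilon> x)"
    and V_pos: "\<forall>\<epsilon> x y. 0 < \<epsilon> \<and> \<epsilon> < e0 \<and> 0 < x \<and> x \<le> y \<longrightarrow>
                  norm (Th1 \<epsilon> x) \<le> norm (Th1 \<epsilon> y)"
    \<comment> \<open>(VI)\<close>
    and VI_1: "\<forall>\<epsilon> s. 0 < \<epsilon> \<and> \<epsilon> < e0 \<longrightarrow> norm (Th1 \<epsilon> s) \<le> K0 * \<epsilon> powr (-a)"
    and VI_2: "\<forall>\<epsilon> s. 0 < \<epsilon> \<and> \<epsilon> < e0 \<longrightarrow> norm (Th2 \<epsilon> s) \<le> K0 * \<epsilon> powr (-b)"
    and VI_3: "\<forall>\<epsilon> s r. 0 < \<epsilon> \<and> \<epsilon> < e0 \<longrightarrow>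
                 norm (Th2 \<epsilon> s - Th2 \<epsilon> r) \<le> K0 * \<epsilon> powr (-c) * \<bar>s - r\<bar>"
    \<comment> \<open>(VII)\<close>
    and VII: "\<forall>\<epsilon> \<epsilon>' s. 0 < \<epsilon>' \<and> \<epsilon>' < \<epsilon> \<and> \<epsilon> < e0 \<longrightarrow>
                 norm (Th1 \<epsilon> s) \<le> norm (Th1 \<epsilon>' s)"
    \<comment> \<open>(VIII)\<close>
    and VIII: "\<forall>\<epsilon> s. 0 < \<epsilon> \<and> \<epsilon> < e0 \<longrightarrow> norm (Th \<epsilon> s) = 1"
  shows "\<exists>K>0. \<forall>j::nat. j \<ge> 1 \<longrightarrow> (\<exists>\<epsilon>1>0. \<forall>\<epsilon>. 0 < \<epsilon> \<and> \<epsilon> < \<epsilon>1 \<and> \<epsilon> < e0 \<longrightarrow>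
            lam_strip \<epsilon> (\<lambda>s. norm (Th1 \<epsilon> s)) j - ereal ((pi / (2 * \<epsilon>))\<^sup>2)
              \<le> lam_schr (\<lambda>s. (norm (Th1 \<epsilon> s))\<^sup>2 / 2) j
                 + ereal (K * \<epsilon> powr (min (min (4 - 2 * (a + b)) (2 - 2 * b))
                                            (min (2 - (a + c)) (2 - 4 * a)))))"
proof -
  define d where "d = min (min (4 - 2 * (a + b)) (2 - 2 * b)) (min (2 - (a + c)) (2 - 4 * a))"
  have d_le: "2 + d \<le> 4 - 4*a" unfolding d_def by (auto simp: min_def)
  define K where "K = pi\<^sup>2/8 * K0^4 + 2"
  have K: "0 < K" unfolding K_def by (simp add: add_nonneg_pos)
  have "lam_strip \<epsilon> (\<lambda>s. norm (Th1 \<epsilon> s)) j - ereal ((pi / (2 * \<epsilon>))\<^sup>2)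
        \<le> lam_schr (\<lambda>s. (norm (Th1 \<epsilon> s))\<^sup>2 / 2) j + ereal (K * \<epsilon> powr d)"
    if \<epsilon>: "0 < \<epsilon>" "\<epsilon> < 1" "\<epsilon> < e0" for \<epsilon> j
  proof -
    obtain \<eta> where \<eta>: "0 < \<eta>" "\<eta> \<le> 1/16"
      and budget: "cutoff_error \<epsilon> \<eta> (K0 * \<epsilon> powr (-a)) \<le> \<epsilon>\<^sup>2 * (K * \<epsilon> powr d) / 2"
      using cutoff_parameter_exists[OF \<epsilon>(1,2) d_le] unfolding K_def by blast
    have "isCont (Th1 \<epsilon>) s" for s
      using Th_deriv \<epsilon> by (metis has_vector_derivative_def has_derivative_continuous)
    then have "continuous_on UNIV (\<lambda>s. norm (Th1 \<epsilon> s))"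
      by (intro continuous_at_imp_continuous_on ballI continuous_intros)
    from lam_strip_le_lam_schr[OF this _ _ \<epsilon>(1) \<eta> _ budget] VI_1 \<epsilon> K
    have "lam_strip \<epsilon> (\<lambda>s. norm (Th1 \<epsilon> s)) j
        \<le> lam_schr (\<lambda>s. (norm (Th1 \<epsilon> s))\<^sup>2 / 2) j + ereal (K * \<epsilon> powr d) + ereal ((pi/(2*\<epsilon>))\<^sup>2)"
      by (simp only: add.assoc plus_ereal.simps(1) add.commute[of "K * \<epsilon> powr d"]) auto
    then show ?thesis by (simp add: ereal_minus_le)
  qed
  then show ?thesis
    unfolding d_def[symmetric] using K by (intro exI[of _ K] conjI allI impI exI[of _ 1]) auto
qed

end
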